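(* Let $x_i,x_j\in V$ be distinct vertices with $x_i$ a potential parent of $x_j$. Then $x_i,x_j$ are not in PP1 relation if and only if $x_i\not\perp x_j$.
   Context: Let $G=(V,E)$ be a DAG on $V=\{x_1,\dots,x_d\}$ whose vertices are random variables generated by a nonlinear additive noise model $x_i=f_i(\mathrm{Pa}(x_i))+\varepsilon_i$ with jointly independent noise terms, assumed identifiable in the sense of Peters et al. (2014) for nonlinear ANMs, and with distribution Markov and faithful to $G$. $\mathrm{Pa}$, $\mathrm{De}$ denote parents and descendants. A path is active (relative to the empty set) if it contains no collider (a vertex with both adjacent path edges pointing into it). A potential parent of $x_j$ is a vertex $x_i\neq x_j$ with $x_i\notin\mathrm{De}(x_j)$. With $C=\mathrm{Pa}(x_j)\setminus\{x_i\}$, the pair is in PP1 relation if $x_i\notin\mathrm{Pa}(x_j)$ and there is no active path between $x_i$ and any vertex of $C$. $\perp$ denotes statistical independence. *)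

theory Defs
  imports "HOL-Probability.Probability"
begin

definition parents :: "('v \<times> 'v) set \<Rightarrow> 'v \<Rightarrow> 'v set" where
  "parents E j = {i. (i, j) \<in> E}"

definition descendants :: "('v \<times> 'v) set \<Rightarrow> 'v \<Rightarrow> 'v set" where
  "descendants E j = {k. (j, k) \<in> E\<^sup>+}"

definition adj :: "('v \<times> 'v) set \<Rightarrow> 'v \<Rightarrow> 'v \<Rightarrow> bool" where
  "adj E u v \<longleftrightarrow> (u, v) \<in> E \<or> (v, u) \<in> E"

definition is_path :: "('v \<times> 'v) set \<Rightarrow> 'v list \<Rightarrow> bool" where
  "is_path E p \<longleftrightarrow> p \<noteq> [] \<and> distinct p \<and>
     (\<forall>k. Suc k < length p \<longrightarrow> adj E (p ! k) (p ! Suc k))"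

definition collider :: "('v \<times> 'v) set \<Rightarrow> 'v list \<Rightarrow> nat \<Rightarrow> bool" where
  "collider E p k \<longleftrightarrow> 0 < k \<and> Suc k < length p \<and>
     (p ! (k - 1), p ! k) \<in> E \<and> (p ! Suc k, p ! k) \<in> E"

text \<open>Active path relative to the empty set: no collider.\<close>
definition active_path :: "('v \<times> 'v) set \<Rightarrow> 'v list \<Rightarrow> bool" where
  "active_path E p \<longleftrightarrow> is_path E p \<and> (\<forall>k. \<not> collider E p k)"

definition active_between :: "('v \<times> 'v) set \<Rightarrow> 'v \<Rightarrow> 'v \<Rightarrow> bool" where
  "active_between E a b \<longleftrightarrow> (\<exists>p. active_path E p \<and> hd p = a \<and> last p = b)"

definition potential_parent :: "('v \<times> 'v) set \<Rightarrow> 'v \<Rightarrow> 'v \<Rightarrow> bool" where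
  "potential_parent E i j \<longleftrightarrow> i \<noteq> j \<and> i \<notin> descendants E j"

definition PP1 :: "('v \<times> 'v) set \<Rightarrow> 'v \<Rightarrow> 'v \<Rightarrow> bool" where
  "PP1 E i j \<longleftrightarrow> i \<notin> parents E j \<and>
     \<not> (\<exists>c \<in> parents E j - {i}. active_between E i c)"

definition d_connecting :: "('v \<times> 'v) set \<Rightarrow> 'v set \<Rightarrow> 'v list \<Rightarrow> bool" where
  "d_connecting E S p \<longleftrightarrow> is_path E p \<and>
     (\<forall>k. 0 < k \<and> Suc k < length p \<longrightarrow>
        (collider E p k \<longrightarrow> (p ! k \<in> S \<or> descendants E (p ! k) \<inter> S \<noteq> {})) \<and>
        (\<not> collider E p k \<longrightarrow> p ! k \<notin> S))"

definition d_separated :: "('v \<times> 'v) set \<Rightarrow> 'v set \<Rightarrow> 'v set \<Rightarrow> 'v set \<Rightarrow> bool" where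
  "d_separated E A B S \<longleftrightarrow>
     \<not> (\<exists>p. hd p \<in> A \<and> last p \<in> B \<and> d_connecting E S p)"

definition gen_alg :: "'a measure \<Rightarrow> ('v \<Rightarrow> 'a \<Rightarrow> real) \<Rightarrow> 'v set \<Rightarrow> 'a measure" where
  "gen_alg M X S = sigma (space M) {X v -` U \<inter> space M | v U. v \<in> S \<and> U \<in> sets borel}"

definition cond_indep :: "'a measure \<Rightarrow> ('v \<Rightarrow> 'a \<Rightarrow> real) \<Rightarrow> 'v set \<Rightarrow> 'v set \<Rightarrow> 'v set \<Rightarrow> bool" where
  "cond_indep M X A B S \<longleftrightarrow>
     (\<forall>P Q. P \<in> sets (gen_alg M X A) \<and> Q \<in> sets (gen_alg M X B) \<longrightarrow>
        (AE \<omega> in M. real_cond_exp M (gen_alg M X S) (indicator (P \<inter> Q)) \<omega> =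
            real_cond_exp M (gen_alg M X S) (indicator P) \<omega> *
            real_cond_exp M (gen_alg M X S) (indicator Q) \<omega>))"

definition markov :: "'a measure \<Rightarrow> ('v \<Rightarrow> 'a \<Rightarrow> real) \<Rightarrow> 'v set \<Rightarrow> ('v \<times> 'v) set \<Rightarrow> bool" where
  "markov M X V E \<longleftrightarrow> (\<forall>A B S. A \<subseteq> V \<and> B \<subseteq> V \<and> S \<subseteq> V \<and>
     A \<inter> B = {} \<and> A \<inter> S = {} \<and> B \<inter> S = {} \<longrightarrow>
     d_separated E A B S \<longrightarrow> cond_indep M X A B S)"

definition faithful :: "'a measure \<Rightarrow> ('v \<Rightarrow> 'a \<Rightarrow> real) \<Rightarrow> 'v set \<Rightarrow> ('v \<times> 'v) set \<Rightarrow> bool" where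
  "faithful M X V E \<longleftrightarrow> (\<forall>A B S. A \<subseteq> V \<and> B \<subseteq> V \<and> S \<subseteq> V \<and>
     A \<inter> B = {} \<and> A \<inter> S = {} \<and> B \<inter> S = {} \<longrightarrow>
     cond_indep M X A B S \<longrightarrow> d_separated E A B S)"

end

theory Submission
  imports Defs
begin

text \<open>
  Conditioning on the trivial \<open>\<sigma>\<close>-algebra is taking
  expectations, so Markov property and faithfulness turn marginal independence of
  \<open>x\<^sub>i\<close> and \<open>x\<^sub>j\<close> into the absence of an active path between them. The remaining graph argument:
  an active path from \<open>x\<^sub>i\<close> reaches \<open>x\<^sub>j\<close> through its last edge either from a parent of \<open>x\<^sub>j\<close>,
  or along an edge leaving \<open>x\<^sub>j\<close>; in the latter case, since the path has no collider, all its
  edges point towards \<open>x\<^sub>i\<close>, making \<open>x\<^sub>i\<close> a descendant of \<open>x\<^sub>j\<close>. Conversely, an active path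
  to a parent extends by the parent's edge into \<open>x\<^sub>j\<close>, acyclicity preventing a new collider.
\<close>

lemma real_cond_exp_trivial_algebra:
  assumes "prob_space M" and sets_F: "sets F = {{}, space M}" and space_F: "space F = space M"
    and f: "integrable M f" and \<omega>: "\<omega> \<in> space M"
  shows "real_cond_exp M F f \<omega> = prob_space.expectation M f"
proof -
  interpret prob_space M by fact
  interpret finite_measure_subalgebra M F
    by unfold_locales (use sets_F space_F in \<open>auto simp: subalgebra_def\<close>)
  define g where "g = real_cond_exp M F f"
  have g_constant: "g \<omega>' = g \<omega>" if "\<omega>' \<in> space M" for \<omega>'
  proof -
    have "g -` {g \<omega>} \<inter> space F \<in> sets F"
      using measurable_sets[of g F borel "{g \<omega>}"] by (simp add: g_def)
    moreover have "\<omega> \<in> g -` {g \<omega>} \<inter> space F" using \<omega> space_F by simp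
    ultimately have "g -` {g \<omega>} \<inter> space F = space M" using sets_F by auto
    then show ?thesis using that space_F by auto
  qed
  have "(\<integral>x \<in> space M. f x \<partial>M) = (\<integral>x \<in> space M. g x \<partial>M)"
    unfolding g_def by (rule real_cond_exp_intA[OF f]) (simp add: sets_F)
  then have "expectation f = expectation g"
    using set_integral_space[OF f] set_integral_space[of M g] real_cond_exp_int(1)[OF f]
    unfolding g_def by simp
  also have "\<dots> = expectation (\<lambda>_. g \<omega>)"
    by (rule Bochner_Integration.integral_cong) (auto simp: g_constant)
  also have "\<dots> = g \<omega>" by (simp add: prob_space)
  finally show ?thesis unfolding g_def by simp
qed

lemma sets_gen_alg_singleton:
  "sets (gen_alg M X {v}) = sigma_sets (space M) {X v -` U \<inter> space M | U. U \<in> sets borel}"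
proof -
  have "{X u -` U \<inter> space M | u U. u \<in> {v} \<and> U \<in> sets borel} =
        {X v -` U \<inter> space M | U. U \<in> sets borel}"
    by auto
  then show ?thesis unfolding gen_alg_def by (subst sets_measure_of) auto
qed

lemma gen_alg_empty:
  shows sets_gen_alg_empty: "sets (gen_alg M X {}) = {{}, space M}"
    and space_gen_alg_empty: "space (gen_alg M X {}) = space M"
proof -
  have no_generators: "{X u -` U \<inter> space M | u U. u \<in> {} \<and> U \<in> sets borel} = {}" by auto
  show "sets (gen_alg M X {}) = {{}, space M}"
    unfolding gen_alg_def no_generators by (simp add: sigma_sets_empty_eq)
  show "space (gen_alg M X {}) = space M"
    unfolding gen_alg_def no_generators by simp
qed

lemma real_cond_exp_gen_alg_empty_indicator:
  assumes "prob_space M" and "S \<in> sets M" and "\<omega> \<in> space M"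
  shows "real_cond_exp M (gen_alg M X {}) (indicator S) \<omega> = measure M S"
proof -
  interpret prob_space M by fact
  have "integrable M (indicator S :: _ \<Rightarrow> real)"
    using assms(2) by (intro integrable_real_indicator) (auto simp: less_top[symmetric])
  then show ?thesis
    using assms(2,3) real_cond_exp_trivial_algebra[OF assms(1)
        sets_gen_alg_empty[of M X] space_gen_alg_empty[of M X]]
    by simp
qed

lemma cond_indep_empty_iff_indep_var:
  assumes "prob_space M" and "X a \<in> borel_measurable M" and "X b \<in> borel_measurable M"
  shows "cond_indep M X {a} {b} {} \<longleftrightarrow> prob_space.indep_var M borel (X a) borel (X b)"
proof -
  interpret prob_space M by fact
  let ?F = "gen_alg M X {}"
  let ?A = "sigma_sets (space M) {X a -` U \<inter> space M | U. U \<in> sets borel}"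
  let ?B = "sigma_sets (space M) {X b -` U \<inter> space M | U. U \<in> sets borel}"
  have A_events: "?A \<subseteq> events"
    by (rule sets.sigma_sets_subset) (auto intro: measurable_sets[OF assms(2)])
  have B_events: "?B \<subseteq> events"
    by (rule sets.sigma_sets_subset) (auto intro: measurable_sets[OF assms(3)])
  have factorizes_iff:
    "(AE \<omega> in M. real_cond_exp M ?F (indicator (P \<inter> Q)) \<omega> =
        real_cond_exp M ?F (indicator P) \<omega> * real_cond_exp M ?F (indicator Q) \<omega>)
     \<longleftrightarrow> prob (P \<inter> Q) = prob P * prob Q"
    if "P \<in> events" and "Q \<in> events" for P Q
    using that
    by (simp add: AE_cong[where Q = "\<lambda>_. prob (P \<inter> Q) = prob P * prob Q"]
        real_cond_exp_gen_alg_empty_indicator[OF assms(1)])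
  have "cond_indep M X {a} {b} {} \<longleftrightarrow> (\<forall>P\<in>?A. \<forall>Q\<in>?B. prob (P \<inter> Q) = prob P * prob Q)"
    unfolding cond_indep_def sets_gen_alg_singleton
    using factorizes_iff A_events B_events by blast
  also have "\<dots> \<longleftrightarrow> indep_var borel (X a) borel (X b)"
    unfolding indep_var_eq indep_sets2_eq using A_events B_events assms(2,3) by auto
  finally show ?thesis .
qed

lemma cond_indep_iff_d_separated:
  assumes "markov M X V E" and "faithful M X V E"
    and "A \<subseteq> V" "B \<subseteq> V" "S \<subseteq> V" "A \<inter> B = {}" "A \<inter> S = {}" "B \<inter> S = {}"
  shows "cond_indep M X A B S \<longleftrightarrow> d_separated E A B S"
  using assms unfolding markov_def faithful_def by blast

lemma d_separated_singletons_empty_iff: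
  "d_separated E {a} {b} {} \<longleftrightarrow> \<not> active_between E a b"
  unfolding d_separated_def active_between_def d_connecting_def active_path_def collider_def
  by auto

lemma active_path_take:
  assumes "active_path E p" and "0 < m"
  shows "active_path E (take m p)"
  using assms unfolding active_path_def is_path_def collider_def
  by (auto simp: nth_take)

lemma active_between_refl: "active_between E a a"
proof -
  have "active_path E [a]"
    unfolding active_path_def is_path_def collider_def by simp
  then show ?thesis unfolding active_between_def by force
qed

lemma active_path_snoc_edge:
  assumes "acyclic E" and "active_path E p" and "(last p, b) \<in> E" and "b \<notin> set p"
  shows "active_path E (p @ [b])"
proof -
  have p: "p \<noteq> []" "distinct p" "\<And>k. Suc k < length p \<Longrightarrow> adj E (p ! k) (p ! Suc k)"
    "\<And>k. \<not> collider E p k"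
    using assms(2) unfolding active_path_def is_path_def by auto
  have last_nth: "p ! (length p - 1) = last p" using p(1) by (simp add: last_conv_nth)
  have "(b, last p) \<notin> E"
    using assms(1,3) unfolding acyclic_def by (meson trancl.r_into_trancl trancl_into_trancl)
  have "is_path E (p @ [b])"
    unfolding is_path_def
  proof (intro conjI allI impI)
    show "distinct (p @ [b])" using p(2) assms(4) by simp
    fix k assume "Suc k < length (p @ [b])"
    then consider "Suc k < length p" | "k = length p - 1" by fastforce
    then show "adj E ((p @ [b]) ! k) ((p @ [b]) ! Suc k)"
      by cases (use p(1,3) last_nth assms(3) in \<open>auto simp: nth_append adj_def\<close>)
  qed simp
  moreover have "\<not> collider E (p @ [b]) k" for k
  proof
    assume collider: "collider E (p @ [b]) k"
    then have "Suc k < length p \<or> k = length p - 1"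
      unfolding collider_def by auto
    then show False
    proof
      assume "Suc k < length p"
      then have "collider E p k"
        using collider unfolding collider_def by (auto simp: nth_append split: if_splits)
      with p(4) show False by blast
    next
      assume "k = length p - 1"
      then show False
        using collider p(1) last_nth \<open>(b, last p) \<notin> E\<close> unfolding collider_def
        by (auto simp: nth_append)
    qed
  qed
  ultimately show ?thesis unfolding active_path_def by blast
qed

lemma active_between_edge:
  assumes "acyclic E" and "active_between E a c" and "(c, b) \<in> E"
  shows "active_between E a b"
proof -
  obtain p where p: "active_path E p" "hd p = a" "last p = c"
    using assms(2) unfolding active_between_def by blast
  have "p \<noteq> []" using p(1) unfolding active_path_def is_path_def by simp
  show ?thesis
  proof (cases "b \<in> set p")
    case True
    then obtain i where i: "i < length p" "p ! i = b" by (auto simp: in_set_conv_nth)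
    have "active_path E (take (Suc i) p)" using active_path_take[OF p(1)] by simp
    moreover have "hd (take (Suc i) p) = a" using p(2) \<open>p \<noteq> []\<close> by (simp add: hd_take)
    moreover have "last (take (Suc i) p) = b"
      using i by (simp add: take_Suc_conv_app_nth)
    ultimately show ?thesis unfolding active_between_def by blast
  next
    case False
    then have "active_path E (p @ [b])"
      using active_path_snoc_edge[OF assms(1) p(1)] p(3) assms(3) by simp
    then show ?thesis unfolding active_between_def using p(2) \<open>p \<noteq> []\<close> by force
  qed
qed

lemma active_path_backward_edge_reaches_hd:
  assumes "active_path E p" and "Suc k < length p" and "(p ! Suc k, p ! k) \<in> E"
  shows "(p ! Suc k, hd p) \<in> E\<^sup>+"
  using assms(2,3)
proof (induction k)
  case 0
  then show ?case using hd_conv_nth[of p] by fastforce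
next
  case (Suc k)
  have "adj E (p ! k) (p ! Suc k)" and "\<not> collider E p (Suc k)"
    using assms(1) Suc.prems(1) unfolding active_path_def is_path_def by auto
  then have "(p ! Suc k, p ! k) \<in> E"
    using Suc.prems unfolding adj_def collider_def by auto
  then have "(p ! Suc k, hd p) \<in> E\<^sup>+" using Suc.IH Suc.prems(1) by simp
  then show ?case using Suc.prems(2) by simp
qed

lemma active_between_imp_active_to_parent:
  assumes "active_between E a b" and "a \<noteq> b" and "a \<notin> descendants E b"
  shows "\<exists>c\<in>parents E b. active_between E a c"
proof -
  obtain p where p: "active_path E p" "hd p = a" "last p = b"
    using assms(1) unfolding active_between_def by blast
  have "p \<noteq> []" using p(1) unfolding active_path_def is_path_def by simp
  obtain k where k: "length p = Suc (Suc k)"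
    using \<open>p \<noteq> []\<close> p(2,3) assms(2) by (cases p; cases "tl p") auto
  have b: "p ! Suc k = b" using p(3) k \<open>p \<noteq> []\<close> by (simp add: last_conv_nth)
  have "adj E (p ! k) b" using p(1) k b unfolding active_path_def is_path_def by auto
  moreover have "(b, p ! k) \<notin> E"
  proof
    assume "(b, p ! k) \<in> E"
    then have "(b, a) \<in> E\<^sup>+"
      using active_path_backward_edge_reaches_hd[OF p(1), of k] k b p(2) by simp
    then show False using assms(3) unfolding descendants_def by simp
  qed
  ultimately have "p ! k \<in> parents E b" unfolding adj_def parents_def by auto
  moreover have "active_between E a (p ! k)"
  proof -
    have "active_path E (take (Suc k) p)" using active_path_take[OF p(1)] by simp
    moreover have "hd (take (Suc k) p) = a" using p(2) \<open>p \<noteq> []\<close> by (simp add: hd_take)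
    moreover have "last (take (Suc k) p) = p ! k" using k by (simp add: take_Suc_conv_app_nth)
    ultimately show ?thesis unfolding active_between_def by blast
  qed
  ultimately show ?thesis by blast
qed

lemma not_PP1_iff_active_to_parent:
  "\<not> PP1 E i j \<longleftrightarrow> (\<exists>c\<in>parents E j. active_between E i c)"
proof
  assume "\<not> PP1 E i j"
  then show "\<exists>c\<in>parents E j. active_between E i c"
    unfolding PP1_def using active_between_refl[of E i] by auto
next
  assume "\<exists>c\<in>parents E j. active_between E i c"
  then show "\<not> PP1 E i j" unfolding PP1_def by auto
qed

lemma PP1_iff_not_active_between:
  assumes "acyclic E" and "potential_parent E i j"
  shows "PP1 E i j \<longleftrightarrow> \<not> active_between E i j"
proof -
  have "i \<noteq> j" and "i \<notin> descendants E j"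
    using assms(2) unfolding potential_parent_def by auto
  then have "active_between E i j \<longleftrightarrow> (\<exists>c\<in>parents E j. active_between E i c)"
    using active_between_imp_active_to_parent[of E i j] active_between_edge[OF assms(1), of i _ j]
    unfolding parents_def by auto
  then show ?thesis using not_PP1_iff_active_to_parent[of E i j] by argo
qed

theorem lemma9:
  fixes M :: "'a measure" and V :: "'v set" and E :: "('v \<times> 'v) set"
    and X N :: "'v \<Rightarrow> 'a \<Rightarrow> real" and f :: "'v \<Rightarrow> ('v \<Rightarrow> real) \<Rightarrow> real"
    and xi xj :: 'v
  assumes "prob_space M"
    and "finite V" and "E \<subseteq> V \<times> V" and "acyclic E"
    and "\<forall>v\<in>V. X v \<in> borel_measurable M"
    and "prob_space.indep_vars M (\<lambda>_. borel) N V"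
    and "\<forall>v\<in>V. \<forall>\<omega>\<in>space M.
           X v \<omega> = f v (\<lambda>u. if u \<in> parents E v then X u \<omega> else 0) + N v \<omega>"
    and "markov M X V E" and "faithful M X V E"
    and "xi \<in> V" and "xj \<in> V" and "xi \<noteq> xj"
    and "potential_parent E xi xj"
  shows "\<not> PP1 E xi xj \<longleftrightarrow> \<not> prob_space.indep_var M borel (X xi) borel (X xj)"
proof -
  have "prob_space.indep_var M borel (X xi) borel (X xj) \<longleftrightarrow> cond_indep M X {xi} {xj} {}"
    by (rule cond_indep_empty_iff_indep_var[OF assms(1), symmetric]) (use assms(5,10,11) in auto)
  also have "\<dots> \<longleftrightarrow> d_separated E {xi} {xj} {}"
    by (rule cond_indep_iff_d_separated[OF assms(8,9)]) (use assms(10-12) in auto)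
  also have "\<dots> \<longleftrightarrow> PP1 E xi xj"
    by (simp only: d_separated_singletons_empty_iff PP1_iff_not_active_between[OF assms(4,13)])
  finally show ?thesis by (rule arg_cong[where f = Not, symmetric])
qed

end
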